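(* For all real $\alpha,\alpha',\beta,\beta'$ with $\beta'\neq0$, every integer $n\ge0$, every integer $0\le k\le n$, and every real $x$, \[ \langle-\alpha-\beta x\rangle_n=\sum_{j=0}^{n}(-1)^jS_{\alpha-\frac{\alpha'}{\beta'}\beta,\ \frac{\beta}{\beta'}}(n,j)\,\langle-\alpha'-\beta'x\rangle_j, \] \[ S_{\alpha,\beta}(n,k)=\sum_{j=k}^{n}(-1)^jS_{\alpha-\frac{\alpha'}{\beta'}\beta,\ \frac{\beta}{\beta'}}(n,j)\,S_{\alpha',\beta'}(j,k). \]
   Context: For real $a$ and integer $n\ge 1$, $\langle a\rangle_n:=a(a+1)\cdots(a+n-1)$ and $\langle a\rangle_0:=1$. For real $\alpha,\beta$ and integers $0\le k\le n$, $S_{\alpha,\beta}(n,k):=\frac{1}{k!}\sum_{j=0}^{k}(-1)^{k-j}\binom{k}{j}\langle-\alpha-\beta j\rangle_n$. *)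

theory Defs
  imports Complex_Main
begin

text \<open>Rising factorial: the library's pochhammer a n = a(a+1)...(a+n-1), pochhammer a 0 = 1.\<close>

definition S_ab :: "real \<Rightarrow> real \<Rightarrow> nat \<Rightarrow> nat \<Rightarrow> real" where
  "S_ab \<alpha> \<beta> n k = (1 / fact k) *
     (\<Sum>j = 0..k. (-1) ^ (k - j) * of_nat (k choose j) * pochhammer (- \<alpha> - \<beta> * of_nat j) n)"

end

theory Submission imports Defs begin

text \<open>Expand <-a-by>_n in the basis <-y>_j of rising factorials: multiplying by n-a-by
and using <-y>_j (n-a-by) = b <-y>_(j+1) + (n-a-bj) <-y>_j gives a triangular recurrence for
the coefficients. Evaluating the expansion at y = 0, 1, 2, ..., where
<-y>_j = (-1)^j j! (y choose j), and inverting the binomial transform identifies the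
coefficients with (-1)^j S_(a,b)(n,j). The first identity is this expansion after the affine
substitution y = a' + b'x. Since S_(a,b)(n,k) is the k-th forward difference at 0 of
x \<mapsto> <-a-bx>_n divided by k!, a linear operation, the second identity follows by applying
it to both sides of the first.\<close>

fun pochhammer_coeff :: "'a::comm_ring_1 \<Rightarrow> 'a \<Rightarrow> nat \<Rightarrow> nat \<Rightarrow> 'a" where
  "pochhammer_coeff a b 0 k = (if k = 0 then 1 else 0)"
| "pochhammer_coeff a b (Suc n) k =
     (if k = 0 then 0 else b * pochhammer_coeff a b n (k - 1))
     + (of_nat n - a - b * of_nat k) * pochhammer_coeff a b n k"

lemma pochhammer_coeff_eq_0: "n < k \<Longrightarrow> pochhammer_coeff a b n k = 0"
  by (induction n arbitrary: k) auto

lemma pochhammer_minus_mult_affine: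
  fixes y :: "'a::comm_ring_1"
  shows "pochhammer (- y) k * (of_nat n - a - b * y) =
           b * pochhammer (- y) (Suc k) + (of_nat n - a - b * of_nat k) * pochhammer (- y) k"
  by (simp add: pochhammer_Suc algebra_simps)

lemma pochhammer_affine_expansion:
  fixes y :: "'a::comm_ring_1"
  shows "pochhammer (- a - b * y) n = (\<Sum>k\<le>n. pochhammer_coeff a b n k * pochhammer (- y) k)"
proof (induction n)
  case 0
  then show ?case by simp
next
  case (Suc n)
  let ?c = "pochhammer_coeff a b n" and ?p = "pochhammer (- y)"
  have shifted: "(\<Sum>k\<le>Suc n. (if k = 0 then 0 else b * ?c (k - 1)) * ?p k)
                   = (\<Sum>k\<le>n. b * ?c k * ?p (Suc k))"
    by (simp only: sum.atMost_Suc_shift) simp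
  have extended: "(\<Sum>k\<le>Suc n. (of_nat n - a - b * of_nat k) * ?c k * ?p k)
                    = (\<Sum>k\<le>n. (of_nat n - a - b * of_nat k) * ?c k * ?p k)"
    by (simp add: pochhammer_coeff_eq_0)
  have "pochhammer (- a - b * y) (Suc n) = (\<Sum>k\<le>n. ?c k * ?p k) * (of_nat n - a - b * y)"
    by (simp add: pochhammer_Suc Suc.IH algebra_simps)
  also have "\<dots> = (\<Sum>k\<le>n. ?c k * (b * ?p (Suc k) + (of_nat n - a - b * of_nat k) * ?p k))"
    by (simp add: sum_distrib_right pochhammer_minus_mult_affine mult.assoc)
  also have "\<dots> = (\<Sum>k\<le>n. b * ?c k * ?p (Suc k))
                   + (\<Sum>k\<le>n. (of_nat n - a - b * of_nat k) * ?c k * ?p k)"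
    by (simp add: sum.distrib[symmetric] algebra_simps)
  also have "\<dots> = (\<Sum>k\<le>Suc n. pochhammer_coeff a b (Suc n) k * ?p k)"
    unfolding shifted[symmetric] extended[symmetric] sum.distrib[symmetric]
    by (rule sum.cong) (simp_all add: algebra_simps)
  finally show ?case .
qed

lemma alternating_sum_choose_mult:
  assumes "m \<le> k"
  shows "(\<Sum>j = m..k. (-1) ^ (k - j) * of_nat (k choose j) * of_nat (j choose m))
           = (if m = k then 1 else (0 :: 'a::comm_ring_1))"
proof -
  define d where "d = k - m"
  have "(\<Sum>j = m..k. (-1) ^ (k - j) * of_nat (k choose j) * of_nat (j choose m))
          = of_nat (k choose m) * (\<Sum>j = m..k. (-1) ^ (k - j) * of_nat (d choose (j - m)) :: 'a)"
    unfolding sum_distrib_left d_def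
    by (rule sum.cong) (auto simp: mult.assoc choose_mult simp flip: of_nat_mult,
                        simp add: algebra_simps)
  also have "(\<Sum>j = m..k. (-1) ^ (k - j) * of_nat (d choose (j - m)))
               = (\<Sum>t\<le>d. (-1) ^ (d - t) * of_nat (d choose t) :: 'a)"
    using sum.shift_bounds_cl_nat_ivl[of "\<lambda>j. (-1) ^ (k - j) * of_nat (d choose (j - m)) :: 'a"
                                       0 m d] assms
    by (simp add: d_def atLeast0AtMost algebra_simps)
  also have "\<dots> = (-1) ^ d * (\<Sum>t\<le>d. (-1) ^ t * of_nat (d choose t))"
    unfolding sum_distrib_left
    by (rule sum.cong)
       (simp_all add: neg_one_power_add_eq_neg_one_power_diff[symmetric] power_add)
  finally show ?thesis
    using choose_alternating_sum[of d, where 'a = 'a] assms by (cases "d = 0") (auto simp: d_def)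
qed

lemma binomial_inversion:
  fixes f g :: "nat \<Rightarrow> 'a::comm_ring_1"
  assumes "\<And>j. f j = (\<Sum>m\<le>j. of_nat (j choose m) * g m)"
  shows "(\<Sum>j\<le>k. (-1) ^ (k - j) * of_nat (k choose j) * f j) = g k"
proof -
  have f_extended: "f j = (\<Sum>m\<le>k. of_nat (j choose m) * g m)" if "j \<le> k" for j
    unfolding assms using that by (intro sum.mono_neutral_left) (simp_all add: binomial_eq_0)
  have "(\<Sum>j\<le>k. (-1) ^ (k - j) * of_nat (k choose j) * f j)
          = (\<Sum>j\<le>k. \<Sum>m\<le>k. (-1) ^ (k - j) * of_nat (k choose j) * of_nat (j choose m) * g m)"
    by (intro sum.cong refl) (simp add: f_extended sum_distrib_left mult.assoc)
  also have "\<dots> = (\<Sum>m\<le>k. \<Sum>j\<le>k. (-1) ^ (k - j) * of_nat (k choose j) * of_nat (j choose m) * g m)"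
    by (rule sum.swap)
  also have "\<dots> = (\<Sum>m\<le>k. (\<Sum>j = m..k. (-1) ^ (k - j) * of_nat (k choose j) * of_nat (j choose m)) * g m)"
    unfolding sum_distrib_right
    by (intro sum.cong refl sum.mono_neutral_right) (auto simp: binomial_eq_0)
  also have "\<dots> = (\<Sum>m\<le>k. if m = k then g m else 0)"
    by (intro sum.cong refl) (simp add: alternating_sum_choose_mult)
  finally show ?thesis by simp
qed

lemma pochhammer_minus_of_nat:
  "pochhammer (- of_nat j :: 'a::field_char_0) m = (-1) ^ m * fact m * of_nat (j choose m)"
proof -
  have "of_nat (j choose m) = (-1) ^ m * pochhammer (- of_nat j :: 'a) m / fact m"
    by (simp add: binomial_gbinomial gbinomial_pochhammer)
  moreover have "(-1) ^ m * (-1) ^ m = (1 :: 'a)"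
    by (simp flip: power_add)
  ultimately show ?thesis
    by (simp add: mult.assoc[symmetric])
qed

lemma pochhammer_coeff_eq_S_ab: "pochhammer_coeff a b n k = (-1) ^ k * S_ab a b n k"
proof -
  define g where "g m = (-1) ^ m * fact m * pochhammer_coeff a b n m" for m
  define f where "f j = pochhammer (- a - b * of_nat j) n" for j
  have f_binomial: "f j = (\<Sum>m\<le>j. of_nat (j choose m) * g m)" for j
  proof -
    have "f j = (\<Sum>m\<le>n. of_nat (j choose m) * g m)"
      unfolding f_def pochhammer_affine_expansion g_def pochhammer_minus_of_nat
      by (rule sum.cong) auto
    also have "\<dots> = (\<Sum>m\<le>max n j. of_nat (j choose m) * g m)"
      by (intro sum.mono_neutral_left) (auto simp: g_def pochhammer_coeff_eq_0)
    also have "\<dots> = (\<Sum>m\<le>j. of_nat (j choose m) * g m)"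
      by (intro sum.mono_neutral_right) (auto simp: binomial_eq_0)
    finally show ?thesis .
  qed
  have "S_ab a b n k = (\<Sum>j\<le>k. (-1) ^ (k - j) * of_nat (k choose j) * f j) / fact k"
    unfolding S_ab_def f_def by (simp add: atLeast0AtMost)
  also have "\<dots> = g k / fact k"
    using binomial_inversion[of f g k] f_binomial by simp
  finally show ?thesis
    by (simp add: g_def flip: power_add)
qed

lemma S_ab_eq_0: "n < k \<Longrightarrow> S_ab a b n k = 0"
  using pochhammer_coeff_eq_S_ab[of a b n k] pochhammer_coeff_eq_0[of n k a b] by simp

lemma pochhammer_expansion_S_ab:
  "pochhammer (- a - b * y) n = (\<Sum>j = 0..n. (-1) ^ j * S_ab a b n j * pochhammer (- y) j)"
  unfolding pochhammer_affine_expansion pochhammer_coeff_eq_S_ab atLeast0AtMost ..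

lemma S_ab_transfer:
  assumes "\<And>x. pochhammer (- a - b * x) n = (\<Sum>j = 0..n. c j * pochhammer (- a' - b' * x) j)"
  shows "S_ab a b n k = (\<Sum>j = 0..n. c j * S_ab a' b' j k)"
proof -
  have "S_ab a b n k = 1 / fact k * (\<Sum>i = 0..k. (-1) ^ (k - i) * of_nat (k choose i) *
           (\<Sum>j = 0..n. c j * pochhammer (- a' - b' * of_nat i) j))"
    unfolding S_ab_def assms ..
  also have "\<dots> = (\<Sum>j = 0..n. c j * (1 / fact k * (\<Sum>i = 0..k. (-1) ^ (k - i) *
           of_nat (k choose i) * pochhammer (- a' - b' * of_nat i) j)))"
    by (simp add: sum_distrib_left sum_distrib_right algebra_simps sum.swap[of _ "{0..k}"])
  finally show ?thesis
    unfolding S_ab_def .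
qed

theorem mainTheorem15:
  fixes \<alpha> \<alpha>' \<beta> \<beta>' x :: real and n k :: nat
  assumes "\<beta>' \<noteq> 0" and "k \<le> n"
  shows "(pochhammer (- \<alpha> - \<beta> * x) n =
           (\<Sum>j = 0..n. (-1) ^ j * S_ab (\<alpha> - \<alpha>' / \<beta>' * \<beta>) (\<beta> / \<beta>') n j
                          * pochhammer (- \<alpha>' - \<beta>' * x) j)) \<and>
         (S_ab \<alpha> \<beta> n k =
           (\<Sum>j = k..n. (-1) ^ j * S_ab (\<alpha> - \<alpha>' / \<beta>' * \<beta>) (\<beta> / \<beta>') n j
                          * S_ab \<alpha>' \<beta>' j k))"
proof -
  define T where "T j = (-1) ^ j * S_ab (\<alpha> - \<alpha>' / \<beta>' * \<beta>) (\<beta> / \<beta>') n j" for j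
  have expansion: "pochhammer (- \<alpha> - \<beta> * y) n = (\<Sum>j = 0..n. T j * pochhammer (- \<alpha>' - \<beta>' * y) j)"
    for y
  proof -
    have "- \<alpha> - \<beta> * y = - (\<alpha> - \<alpha>' / \<beta>' * \<beta>) - \<beta> / \<beta>' * (\<alpha>' + \<beta>' * y)"
      using assms(1) by (simp add: field_simps)
    moreover have "- \<alpha>' - \<beta>' * y = - (\<alpha>' + \<beta>' * y)"
      by simp
    ultimately show ?thesis
      unfolding T_def by (simp only: pochhammer_expansion_S_ab)
  qed
  have "S_ab \<alpha> \<beta> n k = (\<Sum>j = 0..n. T j * S_ab \<alpha>' \<beta>' j k)"
    using expansion by (rule S_ab_transfer)
  also have "\<dots> = (\<Sum>j = k..n. T j * S_ab \<alpha>' \<beta>' j k)"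
    by (intro sum.mono_neutral_right) (auto simp: S_ab_eq_0)
  finally show ?thesis
    using expansion[of x] unfolding T_def by simp
qed

end
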